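(* Let $G$ be a group, $\omega$ a normalized 3-cocycle, $X,Y$ $G$-sets, and $\Psi_X,\Psi_Y$ as below. Let $(F,s):\mathcal M(X,\Psi_X)\to\mathcal M(Y,\Psi_Y)$ be a $\mathrm{Vec}_G^\omega$-module functor that preserves simple objects (i.e. $F(x)$ is simple for every simple $x$). Then there exist a $G$-equivariant map $f:X\to Y$ and a map $\Lambda:G\times X\to\mathbb F^\times$ satisfying $\Lambda(h,g^{-1}\cdot x)\Lambda^{-1}(gh,x)\Lambda(g,x)=\Psi_X^{-1}(g,h,x)\Psi_Y(g,h,f(x))$ for all $g,h\in G,x\in X$, such that $(F,s)$ is isomorphic as a module functor to $F_{f,\Lambda}$.
   Context: $\mathbb F$ algebraically closed. $\mathrm{Vec}_G^\omega$: finite-dimensional $G$-graded vector spaces, simple objects $\delta^g$, $\delta^g\otimes\delta^h=\delta^{gh}$, associator $\omega(g,h,k)\mathrm{id}$. For a $G$-set $X$ and normalized $\Psi:G\times G\times X\to\mathbb F^\times$ with $\Psi(h,k,g^{-1}\cdot x)\Psi^{-1}(gh,k,x)\Psi(g,hk,x)\Psi^{-1}(g,h,x)=\omega^{-1}(g,h,k)$, $\mathcal M(X,\Psi)$ is the category of finite-dimensional $X$-graded vector spaces (simple objects $x\in X$) with $\delta^g\triangleright x=g\cdot x$ and module constraint $m_{\delta^g,\delta^h,x}=\Psi(g,h,(gh)\cdot x)\mathrm{id}$. A module functor is an $\mathbb F$-linear functor with natural isomorphism $s_{C,M}:F(C\triangleright M)\to C\triangleright F(M)$ satisfying the module pentagon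 axiom; an isomorphism of module functors is a natural isomorphism $\eta$ with $s^H_{C,M}\circ\eta_{C\triangleright M}=(\mathrm{id}_C\triangleright\eta_M)\circ s^F_{C,M}$. For $f,\Lambda$ as in the claim, $F_{f,\Lambda}$ is the module functor with $F_{f,\Lambda}(x)=f(x)$ on simple objects (extended to an $\mathbb F$-linear functor) and coherence datum $s_{\delta^g,x}=\Lambda(g,g\cdot x)\,\mathrm{id}_{g\cdot f(x)}$. *)

theory Defs
  imports "HOL-Algebra.Group_Action" "HOL-Computational_Algebra.Polynomial"
begin

section \<open>Concrete model of graded vector spaces\<close>

text \<open>A finite-dimensional S-graded vector space is given (up to isomorphism) by a
finite basis together with a grading of the basis elements. Basis elements live in a
universal type closed under pairing, so that tensor products / actions have basis
the pairs of basis elements.\<close>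

datatype bt = Lf nat | Nd bt bt

type_synonym 'a gobj = "bt set \<times> (bt \<Rightarrow> 'a)"
type_synonym 'k mat = "bt \<Rightarrow> bt \<Rightarrow> 'k"

definition gobj :: "'a set \<Rightarrow> 'a gobj \<Rightarrow> bool" where
  "gobj S V \<longleftrightarrow> finite (fst V) \<and> snd V ` fst V \<subseteq> S"

text \<open>Morphisms V \<rightarrow> W: grading-preserving linear maps, as matrices indexed (row, column)
by (basis of W, basis of V).\<close>
definition ghom :: "'a gobj \<Rightarrow> 'a gobj \<Rightarrow> ('k::zero) mat set" where
  "ghom V W = {\<phi>. \<forall>w v. \<phi> w v \<noteq> 0 \<longrightarrow> w \<in> fst W \<and> v \<in> fst V \<and> snd W w = snd V v}"

definition mid :: "'a gobj \<Rightarrow> ('k::comm_ring_1) mat" where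
  "mid V = (\<lambda>w v. if w = v \<and> v \<in> fst V then 1 else 0)"

definition mcomp :: "'a gobj \<Rightarrow> ('k::comm_ring_1) mat \<Rightarrow> 'k mat \<Rightarrow> 'k mat" where
  "mcomp V \<psi> \<phi> = (\<lambda>w u. \<Sum>v\<in>fst V. \<psi> w v * \<phi> v u)"

definition iso_mor :: "'a gobj \<Rightarrow> 'a gobj \<Rightarrow> ('k::comm_ring_1) mat \<Rightarrow> bool" where
  "iso_mor V W \<phi> \<longleftrightarrow> \<phi> \<in> ghom V W \<and>
     (\<exists>\<psi>\<in>ghom W V. mcomp W \<psi> \<phi> = mid V \<and> mcomp V \<phi> \<psi> = mid W)"

definition simple_obj :: "'a gobj \<Rightarrow> bool" where
  "simple_obj V \<longleftrightarrow> card (fst V) = 1"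

definition sgrade :: "'a gobj \<Rightarrow> 'a" where
  "sgrade V = snd V (the_elem (fst V))"

section \<open>Vec_G^omega and its action on M(X,Psi)\<close>

definition gtens :: "('g, 'c) monoid_scheme \<Rightarrow> 'g gobj \<Rightarrow> 'g gobj \<Rightarrow> 'g gobj" where
  "gtens G C D = ({Nd a b | a b. a \<in> fst C \<and> b \<in> fst D},
     (\<lambda>t. case t of Nd a b \<Rightarrow> snd C a \<otimes>\<^bsub>G\<^esub> snd D b | Lf n \<Rightarrow> undefined))"

definition act :: "('g \<Rightarrow> 'x \<Rightarrow> 'x) \<Rightarrow> 'g gobj \<Rightarrow> 'x gobj \<Rightarrow> 'x gobj" where
  "act \<phi> C M = ({Nd a m | a m. a \<in> fst C \<and> m \<in> fst M},
     (\<lambda>t. case t of Nd a m \<Rightarrow> \<phi> (snd C a) (snd M m) | Lf n \<Rightarrow> undefined))"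

text \<open>Action of a pair of morphisms (f \<triangleright> \<phi>).\<close>
definition kron :: "('k::comm_ring_1) mat \<Rightarrow> 'k mat \<Rightarrow> 'k mat" where
  "kron f \<phi> = (\<lambda>u v. case u of
      Nd a m \<Rightarrow> (case v of Nd a' m' \<Rightarrow> f a a' * \<phi> m m' | Lf _ \<Rightarrow> 0)
    | Lf _ \<Rightarrow> 0)"

text \<open>Module constraint m_{C,D,M} : (C \<otimes> D) \<triangleright> M \<rightarrow> C \<triangleright> (D \<triangleright> M), given on simple
summands by m_{\<delta>^g,\<delta>^h,x} = \<Psi>(g,h,(gh)\<cdot>x) id.\<close>
definition mcon :: "('g, 'c) monoid_scheme \<Rightarrow> ('g \<Rightarrow> 'x \<Rightarrow> 'x) \<Rightarrow> ('g \<Rightarrow> 'g \<Rightarrow> 'x \<Rightarrow> 'k::comm_ring_1)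
    \<Rightarrow> 'g gobj \<Rightarrow> 'g gobj \<Rightarrow> 'x gobj \<Rightarrow> 'k mat" where
  "mcon G \<phi> \<Psi> C D M = (\<lambda>u v. case u of
      Nd a (Nd b m) \<Rightarrow>
        (if v = Nd (Nd a b) m \<and> a \<in> fst C \<and> b \<in> fst D \<and> m \<in> fst M
         then \<Psi> (snd C a) (snd D b) (\<phi> (snd C a \<otimes>\<^bsub>G\<^esub> snd D b) (snd M m)) else 0)
    | _ \<Rightarrow> 0)"

definition normalized_3cocycle :: "('g, 'c) monoid_scheme \<Rightarrow> ('g \<Rightarrow> 'g \<Rightarrow> 'g \<Rightarrow> 'k::field) \<Rightarrow> bool" where
  "normalized_3cocycle G \<omega> \<longleftrightarrow>
     (\<forall>g\<in>carrier G. \<forall>h\<in>carrier G. \<forall>k\<in>carrier G. \<omega> g h k \<noteq> 0) \<and>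
     (\<forall>g\<in>carrier G. \<forall>h\<in>carrier G. \<forall>k\<in>carrier G. \<forall>l\<in>carrier G.
        \<omega> h k l * \<omega> g (h \<otimes>\<^bsub>G\<^esub> k) l * \<omega> g h k
        = \<omega> (g \<otimes>\<^bsub>G\<^esub> h) k l * \<omega> g h (k \<otimes>\<^bsub>G\<^esub> l)) \<and>
     (\<forall>g\<in>carrier G. \<forall>h\<in>carrier G.
        \<omega> \<one>\<^bsub>G\<^esub> g h = 1 \<and> \<omega> g \<one>\<^bsub>G\<^esub> h = 1 \<and> \<omega> g h \<one>\<^bsub>G\<^esub> = 1)"

definition module_cochain :: "('g, 'c) monoid_scheme \<Rightarrow> 'x set \<Rightarrow> ('g \<Rightarrow> 'x \<Rightarrow> 'x)
    \<Rightarrow> ('g \<Rightarrow> 'g \<Rightarrow> 'g \<Rightarrow> 'k::field) \<Rightarrow> ('g \<Rightarrow> 'g \<Rightarrow> 'x \<Rightarrow> 'k) \<Rightarrow> bool" where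
  "module_cochain G X \<phi> \<omega> \<Psi> \<longleftrightarrow>
     (\<forall>g\<in>carrier G. \<forall>h\<in>carrier G. \<forall>x\<in>X. \<Psi> g h x \<noteq> 0) \<and>
     (\<forall>g\<in>carrier G. \<forall>x\<in>X. \<Psi> \<one>\<^bsub>G\<^esub> g x = 1 \<and> \<Psi> g \<one>\<^bsub>G\<^esub> x = 1) \<and>
     (\<forall>g\<in>carrier G. \<forall>h\<in>carrier G. \<forall>k\<in>carrier G. \<forall>x\<in>X.
        \<Psi> h k (\<phi> (inv\<^bsub>G\<^esub> g) x) * inverse (\<Psi> (g \<otimes>\<^bsub>G\<^esub> h) k x) * \<Psi> g (h \<otimes>\<^bsub>G\<^esub> k) x
          * inverse (\<Psi> g h x) = inverse (\<omega> g h k))"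

section \<open>Linear functors, module functors and their isomorphisms\<close>

definition lin_functor :: "'x set \<Rightarrow> 'y set \<Rightarrow> ('x gobj \<Rightarrow> 'y gobj)
    \<Rightarrow> ('x gobj \<Rightarrow> 'x gobj \<Rightarrow> ('k::comm_ring_1) mat \<Rightarrow> 'k mat) \<Rightarrow> bool" where
  "lin_functor X Y Fo Fm \<longleftrightarrow>
     (\<forall>V. gobj X V \<longrightarrow> gobj Y (Fo V)) \<and>
     (\<forall>V W \<phi>. gobj X V \<and> gobj X W \<and> \<phi> \<in> ghom V W \<longrightarrow> Fm V W \<phi> \<in> ghom (Fo V) (Fo W)) \<and>
     (\<forall>V. gobj X V \<longrightarrow> Fm V V (mid V) = mid (Fo V)) \<and>
     (\<forall>U V W \<phi> \<psi>. gobj X U \<and> gobj X V \<and> gobj X W \<and> \<phi> \<in> ghom U V \<and> \<psi> \<in> ghom V W \<longrightarrow>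
        Fm U W (mcomp V \<psi> \<phi>) = mcomp (Fo V) (Fm V W \<psi>) (Fm U V \<phi>)) \<and>
     (\<forall>V W \<phi> \<psi>. gobj X V \<and> gobj X W \<and> \<phi> \<in> ghom V W \<and> \<psi> \<in> ghom V W \<longrightarrow>
        Fm V W (\<lambda>w v. \<phi> w v + \<psi> w v) = (\<lambda>w v. Fm V W \<phi> w v + Fm V W \<psi> w v)) \<and>
     (\<forall>V W c \<phi>. gobj X V \<and> gobj X W \<and> \<phi> \<in> ghom V W \<longrightarrow>
        Fm V W (\<lambda>w v. c * \<phi> w v) = (\<lambda>w v. c * Fm V W \<phi> w v))"

definition module_functor :: "('g, 'c) monoid_scheme \<Rightarrow> 'x set \<Rightarrow> ('g \<Rightarrow> 'x \<Rightarrow> 'x)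
    \<Rightarrow> ('g \<Rightarrow> 'g \<Rightarrow> 'x \<Rightarrow> 'k::comm_ring_1) \<Rightarrow> 'y set \<Rightarrow> ('g \<Rightarrow> 'y \<Rightarrow> 'y) \<Rightarrow> ('g \<Rightarrow> 'g \<Rightarrow> 'y \<Rightarrow> 'k)
    \<Rightarrow> ('x gobj \<Rightarrow> 'y gobj) \<Rightarrow> ('x gobj \<Rightarrow> 'x gobj \<Rightarrow> 'k mat \<Rightarrow> 'k mat)
    \<Rightarrow> ('g gobj \<Rightarrow> 'x gobj \<Rightarrow> 'k mat) \<Rightarrow> bool" where
  "module_functor G X \<phi>X \<Psi>X Y \<phi>Y \<Psi>Y Fo Fm s \<longleftrightarrow>
     lin_functor X Y Fo Fm \<and>
     (\<forall>C M. gobj (carrier G) C \<and> gobj X M \<longrightarrow>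
        iso_mor (Fo (act \<phi>X C M)) (act \<phi>Y C (Fo M)) (s C M)) \<and>
     (\<forall>C C' M M' f \<phi>. gobj (carrier G) C \<and> gobj (carrier G) C' \<and> gobj X M \<and> gobj X M'
        \<and> f \<in> ghom C C' \<and> \<phi> \<in> ghom M M' \<longrightarrow>
        mcomp (Fo (act \<phi>X C' M')) (s C' M') (Fm (act \<phi>X C M) (act \<phi>X C' M') (kron f \<phi>))
        = mcomp (act \<phi>Y C (Fo M)) (kron f (Fm M M' \<phi>)) (s C M)) \<and>
     (\<forall>C D M. gobj (carrier G) C \<and> gobj (carrier G) D \<and> gobj X M \<longrightarrow>
        mcomp (act \<phi>Y C (Fo (act \<phi>X D M))) (kron (mid C) (s D M))
          (mcomp (Fo (act \<phi>X C (act \<phi>X D M))) (s C (act \<phi>X D M))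
             (Fm (act \<phi>X (gtens G C D) M) (act \<phi>X C (act \<phi>X D M)) (mcon G \<phi>X \<Psi>X C D M)))
        = mcomp (act \<phi>Y (gtens G C D) (Fo M)) (mcon G \<phi>Y \<Psi>Y C D (Fo M)) (s (gtens G C D) M))"

definition module_functor_iso :: "('g, 'c) monoid_scheme \<Rightarrow> 'x set \<Rightarrow> ('g \<Rightarrow> 'x \<Rightarrow> 'x)
    \<Rightarrow> ('g \<Rightarrow> 'y \<Rightarrow> 'y)
    \<Rightarrow> ('x gobj \<Rightarrow> 'y gobj) \<Rightarrow> ('x gobj \<Rightarrow> 'x gobj \<Rightarrow> ('k::comm_ring_1) mat \<Rightarrow> 'k mat)
    \<Rightarrow> ('g gobj \<Rightarrow> 'x gobj \<Rightarrow> 'k mat)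
    \<Rightarrow> ('x gobj \<Rightarrow> 'y gobj) \<Rightarrow> ('x gobj \<Rightarrow> 'x gobj \<Rightarrow> 'k mat \<Rightarrow> 'k mat)
    \<Rightarrow> ('g gobj \<Rightarrow> 'x gobj \<Rightarrow> 'k mat) \<Rightarrow> ('x gobj \<Rightarrow> 'k mat) \<Rightarrow> bool" where
  "module_functor_iso G X \<phi>X \<phi>Y Fo Fm sF Ho Hm sH \<eta> \<longleftrightarrow>
     (\<forall>V. gobj X V \<longrightarrow> iso_mor (Fo V) (Ho V) (\<eta> V)) \<and>
     (\<forall>V W \<phi>. gobj X V \<and> gobj X W \<and> \<phi> \<in> ghom V W \<longrightarrow>
        mcomp (Ho V) (Hm V W \<phi>) (\<eta> V) = mcomp (Fo W) (\<eta> W) (Fm V W \<phi>)) \<and>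
     (\<forall>C M. gobj (carrier G) C \<and> gobj X M \<longrightarrow>
        mcomp (Ho (act \<phi>X C M)) (sH C M) (\<eta> (act \<phi>X C M))
        = mcomp (act \<phi>Y C (Fo M)) (kron (mid C) (\<eta> M)) (sF C M))"

text \<open>(H,s^H) is (a realisation of) F_{f,\<Lambda>}: H(x) = f(x) on simple objects and
  s_{\<delta>^g,x} = \<Lambda>(g, g\<cdot>x) id.\<close>
definition is_F_f_Lambda :: "('g, 'c) monoid_scheme \<Rightarrow> 'x set \<Rightarrow> ('g \<Rightarrow> 'x \<Rightarrow> 'x)
    \<Rightarrow> ('g \<Rightarrow> 'y \<Rightarrow> 'y) \<Rightarrow> ('x \<Rightarrow> 'y) \<Rightarrow> ('g \<Rightarrow> 'x \<Rightarrow> 'k::comm_ring_1)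
    \<Rightarrow> ('x gobj \<Rightarrow> 'y gobj) \<Rightarrow> ('g gobj \<Rightarrow> 'x gobj \<Rightarrow> 'k mat) \<Rightarrow> bool" where
  "is_F_f_Lambda G X \<phi>X \<phi>Y f \<Lambda> Ho sH \<longleftrightarrow>
     (\<forall>V. gobj X V \<and> simple_obj V \<longrightarrow> simple_obj (Ho V) \<and> sgrade (Ho V) = f (sgrade V)) \<and>
     (\<forall>C M. gobj (carrier G) C \<and> simple_obj C \<and> gobj X M \<and> simple_obj M \<longrightarrow>
        sH C M (the_elem (fst (act \<phi>Y C (Ho M)))) (the_elem (fst (Ho (act \<phi>X C M))))
        = \<Lambda> (sgrade C) (\<phi>X (sgrade C) (sgrade M)))"

definition alg_closed :: "'k::field itself \<Rightarrow> bool" where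
  "alg_closed _ \<longleftrightarrow> (\<forall>p :: 'k poly. degree p \<ge> 1 \<longrightarrow> (\<exists>z. poly p z = 0))"

end

theory Submission
  imports Defs
begin

text \<open>On simple objects a simple-preserving module functor is described by scalars: the degree of
  \<open>F(x)\<close> defines \<open>f(x)\<close>, and the coherence isomorphism \<open>s\<close> on \<open>\<delta>\<^sup>g \<triangleright> x\<close>, a morphism between
  one-dimensional spaces, is a nonzero scalar, which defines \<open>\<Lambda>\<close>. That \<open>s\<close> preserves degrees is
  the equivariance of \<open>f\<close>, and the module pentagon evaluated on \<open>\<delta>\<^sup>g, \<delta>\<^sup>h, x\<close>, where the module
  constraints contribute \<open>\<Psi>\<^sub>X\<close> and \<open>\<Psi>\<^sub>Y\<close>, is the cocycle identity for \<open>\<Lambda>\<close>.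
  The category has many simple objects of each degree, and \<open>F\<close> may send the canonical isomorphisms
  between them to arbitrary nonzero multiples of canonical isomorphisms. Rescaling \<open>F\<close> objectwise,
  which yields an isomorphic module functor, removes this freedom, so that \<open>f\<close> and \<open>\<Lambda>\<close> only
  depend on degrees.\<close>

subsection \<open>Graded matrices\<close>

lemma ghomD: "\<phi> \<in> ghom V W \<Longrightarrow> \<phi> w v \<noteq> 0 \<Longrightarrow> w \<in> fst W \<and> v \<in> fst V \<and> snd W w = snd V v"
  unfolding ghom_def by blast

lemma mid_ghom: "mid V \<in> ghom V V"
  unfolding mid_def ghom_def by auto

lemma mcomp_mid_left:
  assumes "finite (fst W)" "\<phi> \<in> ghom V W"
  shows "mcomp W (mid W) \<phi> = (\<phi>::'k::comm_ring_1 mat)"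
proof (intro ext)
  fix w u
  have "mcomp W (mid W) \<phi> w u = (if w \<in> fst W then \<phi> w u else 0)"
    unfolding mcomp_def mid_def using assms(1)
    by (simp add: if_distrib[where f="\<lambda>x. x * _"] sum.delta cong: if_cong)
  then show "mcomp W (mid W) \<phi> w u = \<phi> w u"
    using ghomD[OF assms(2)] by auto
qed

lemma mcomp_mid_right:
  assumes "finite (fst V)" "\<phi> \<in> ghom V W"
  shows "mcomp V \<phi> (mid V) = (\<phi>::'k::comm_ring_1 mat)"
proof (intro ext)
  fix w u
  have "mcomp V \<phi> (mid V) w u = (if u \<in> fst V then \<phi> w u else 0)"
    unfolding mcomp_def mid_def using assms(1)
    by (simp add: if_distrib[where f="\<lambda>x. _ * x"] sum.delta' cong: if_cong)
  then show "mcomp V \<phi> (mid V) w u = \<phi> w u"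
    using ghomD[OF assms(2)] by auto
qed

lemma iso_morD: "iso_mor V W \<phi> \<Longrightarrow> \<phi> \<in> ghom V W"
  unfolding iso_mor_def by blast

lemma iso_mor_mid: "finite (fst V) \<Longrightarrow> iso_mor V V (mid V :: 'k::comm_ring_1 mat)"
  unfolding iso_mor_def by (intro conjI mid_ghom bexI[of _ "mid V"]) (simp_all add: mcomp_mid_left[OF _ mid_ghom])

definition mscale :: "'k \<Rightarrow> ('k::times) mat \<Rightarrow> 'k mat" where
  "mscale c \<phi> = (\<lambda>w v. c * \<phi> w v)"

lemma mscale_ghom: "\<phi> \<in> ghom V W \<Longrightarrow> mscale c \<phi> \<in> ghom V W"
  for \<phi> :: "'k::mult_zero mat"
  unfolding ghom_def mscale_def by (auto dest: mult_not_zero)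

lemma mscale_one [simp]: "mscale 1 \<phi> = (\<phi>::'k::monoid_mult mat)"
  unfolding mscale_def by simp

lemma mscale_mscale [simp]: "mscale a (mscale b \<phi>) = mscale (a * b) (\<phi>::'k::semigroup_mult mat)"
  unfolding mscale_def by (simp add: mult.assoc)

lemma mcomp_mscale_left [simp]:
  "mcomp V (mscale c \<psi>) \<phi> = mscale c (mcomp V \<psi> (\<phi>::'k::comm_ring_1 mat))"
  unfolding mcomp_def mscale_def by (simp add: sum_distrib_left mult.assoc)

lemma mcomp_mscale_right [simp]:
  "mcomp V \<psi> (mscale c \<phi>) = mscale c (mcomp V \<psi> (\<phi>::'k::comm_ring_1 mat))"
  unfolding mcomp_def mscale_def by (simp add: sum_distrib_left mult_ac)

lemma iso_mor_mscale:
  assumes "iso_mor V W \<phi>" "c \<noteq> 0"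
  shows "iso_mor V W (mscale c (\<phi>::'k::field mat))"
proof -
  obtain \<psi> where \<psi>: "\<psi> \<in> ghom W V" "mcomp W \<psi> \<phi> = mid V" "mcomp V \<phi> \<psi> = mid W"
    using assms(1) unfolding iso_mor_def by blast
  show ?thesis
    unfolding iso_mor_def
    using iso_morD[OF assms(1)] \<psi> assms(2)
    by (intro conjI mscale_ghom bexI[of _ "mscale (inverse c) \<psi>"]) auto
qed

subsection \<open>Action and tensor product of graded objects\<close>

lemma Nd_in_act: "Nd a m \<in> fst (act \<psi> C M) \<longleftrightarrow> a \<in> fst C \<and> m \<in> fst M"
  unfolding act_def by auto

lemma snd_act_Nd: "snd (act \<psi> C M) (Nd a m) = \<psi> (snd C a) (snd M m)"
  unfolding act_def by simp

lemma Lf_notin_act: "Lf n \<notin> fst (act \<psi> C M)"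
  unfolding act_def by auto

lemma finite_act: "finite (fst C) \<Longrightarrow> finite (fst M) \<Longrightarrow> finite (fst (act \<psi> C M))"
proof -
  have "fst (act \<psi> C M) = (\<lambda>(a, m). Nd a m) ` (fst C \<times> fst M)"
    unfolding act_def by auto
  then show "finite (fst C) \<Longrightarrow> finite (fst M) \<Longrightarrow> finite (fst (act \<psi> C M))"
    by simp
qed

lemma gobj_finite: "gobj S V \<Longrightarrow> finite (fst V)"
  unfolding gobj_def by blast

lemma gobj_act:
  assumes "group_action G X \<phi>" "gobj (carrier G) C" "gobj X M"
  shows "gobj X (act \<phi> C M)"
  using assms(2,3) finite_act[of C M \<phi>] group_action.element_image[OF assms(1) _ _ refl]
  unfolding gobj_def by (auto simp: act_def image_subset_iff)

lemma gobj_gtens: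
  assumes "group G" "gobj (carrier G) C" "gobj (carrier G) D"
  shows "gobj (carrier G) (gtens G C D)"
proof -
  have "fst (gtens G C D) = (\<lambda>(a, b). Nd a b) ` (fst C \<times> fst D)"
    unfolding gtens_def by auto
  then show ?thesis
    using assms subgroup.m_closed[OF group.subgroup_self[OF assms(1)]]
    unfolding gobj_def gtens_def by (auto simp: image_subset_iff)
qed

lemma kron_mid: "kron (mid C) (mid M) = (mid (act \<psi> C M) :: 'k::comm_ring_1 mat)"
  by (intro ext) (auto simp: kron_def mid_def Nd_in_act Lf_notin_act split: bt.splits)

lemma kron_mscale_right: "kron f (mscale c \<phi>) = mscale c (kron f (\<phi>::'k::comm_ring_1 mat))"
  unfolding kron_def mscale_def by (intro ext) (auto simp: mult_ac split: bt.splits)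

subsection \<open>Simple objects\<close>

definition simple_of :: "'a \<Rightarrow> 'a gobj" where
  "simple_of x = ({Lf 0}, \<lambda>_. x)"

definition entry :: "'a gobj \<Rightarrow> 'b gobj \<Rightarrow> 'k mat \<Rightarrow> 'k" where
  "entry V W \<phi> = \<phi> (the_elem (fst W)) (the_elem (fst V))"

definition unit_mor :: "'a gobj \<Rightarrow> 'b gobj \<Rightarrow> ('k::zero_neq_one) mat" where
  "unit_mor V W = (\<lambda>w v. if w = the_elem (fst W) \<and> v = the_elem (fst V) then 1 else 0)"

lemma simple_obj_iff: "simple_obj V \<longleftrightarrow> (\<exists>b. fst V = {b})"
  unfolding simple_obj_def by (simp add: card_1_singleton_iff)

lemma simple_obj_fst: "simple_obj V \<Longrightarrow> fst V = {the_elem (fst V)}"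
  unfolding simple_obj_def by (elim card_1_singletonE) simp

lemma sgrade_in: "gobj S V \<Longrightarrow> simple_obj V \<Longrightarrow> sgrade V \<in> S"
  unfolding gobj_def sgrade_def by (metis image_subset_iff insert_iff simple_obj_fst)

lemma simple_of_simple: "simple_obj (simple_of x)"
  and sgrade_simple_of [simp]: "sgrade (simple_of x) = x"
  and gobj_simple_of: "x \<in> S \<Longrightarrow> gobj S (simple_of x)"
  unfolding simple_of_def simple_obj_def sgrade_def gobj_def by auto

lemma simple_act:
  assumes "simple_obj C" "simple_obj M"
  shows "simple_obj (act p C M)"
    and "the_elem (fst (act p C M)) = Nd (the_elem (fst C)) (the_elem (fst M))"
    and "sgrade (act p C M) = p (sgrade C) (sgrade M)"
proof -
  have "fst (act p C M) = {Nd (the_elem (fst C)) (the_elem (fst M))}"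
    using simple_obj_fst[OF assms(1)] simple_obj_fst[OF assms(2)] unfolding act_def by auto
  then show "simple_obj (act p C M)"
    and "the_elem (fst (act p C M)) = Nd (the_elem (fst C)) (the_elem (fst M))"
    and "sgrade (act p C M) = p (sgrade C) (sgrade M)"
    by (auto simp: simple_obj_iff sgrade_def snd_act_Nd)
qed

lemma simple_gtens:
  assumes "simple_obj C" "simple_obj D"
  shows "simple_obj (gtens G C D)"
    and "the_elem (fst (gtens G C D)) = Nd (the_elem (fst C)) (the_elem (fst D))"
    and "sgrade (gtens G C D) = sgrade C \<otimes>\<^bsub>G\<^esub> sgrade D"
proof -
  have "fst (gtens G C D) = {Nd (the_elem (fst C)) (the_elem (fst D))}"
    using simple_obj_fst[OF assms(1)] simple_obj_fst[OF assms(2)] unfolding gtens_def by auto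
  then show "simple_obj (gtens G C D)"
    and "the_elem (fst (gtens G C D)) = Nd (the_elem (fst C)) (the_elem (fst D))"
    and "sgrade (gtens G C D) = sgrade C \<otimes>\<^bsub>G\<^esub> sgrade D"
    by (auto simp: simple_obj_iff sgrade_def gtens_def)
qed

lemma entry_mcomp:
  "simple_obj B \<Longrightarrow> entry A C (mcomp B \<psi> \<phi>) = entry B C \<psi> * entry A B (\<phi>::'k::comm_ring_1 mat)"
  unfolding entry_def mcomp_def by (subst simple_obj_fst) simp_all

lemma entry_mscale [simp]: "entry V W (mscale c \<phi>) = c * entry V W \<phi>"
  unfolding entry_def mscale_def by simp

lemma entry_unit_mor [simp]: "entry V W (unit_mor V W) = 1"
  unfolding entry_def unit_mor_def by simp

lemma entry_mid: "simple_obj V \<Longrightarrow> entry V V (mid V) = 1"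
  unfolding entry_def mid_def by (metis singletonI simple_obj_fst)

lemma entry_kron:
  assumes "simple_obj C" "simple_obj M" "simple_obj C'" "simple_obj M'"
  shows "entry (act p C M) (act q C' M') (kron f \<phi>) = entry C C' f * entry M M' (\<phi>::'k::comm_ring_1 mat)"
  by (simp add: entry_def simple_act assms kron_def)

lemma ghom_entry_sgrade: "\<phi> \<in> ghom V W \<Longrightarrow> entry V W \<phi> \<noteq> 0 \<Longrightarrow> sgrade W = sgrade V"
  unfolding entry_def sgrade_def using ghomD by blast

lemma iso_mor_entry_nonzero:
  assumes "iso_mor V W \<phi>" "simple_obj V" "simple_obj W"
  shows "entry V W (\<phi>::'k::comm_ring_1 mat) \<noteq> 0"
proof
  assume "entry V W \<phi> = 0"
  moreover obtain \<psi> where "mcomp W \<psi> \<phi> = mid V"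
    using assms(1) unfolding iso_mor_def by blast
  moreover have "entry V V (mid V :: 'k mat) = 1"
    using entry_mid[OF assms(2)] .
  ultimately show False
    using entry_mcomp[OF assms(3), of V V \<psi> \<phi>] by simp
qed

lemma unit_mor_ghom:
  "simple_obj V \<Longrightarrow> simple_obj W \<Longrightarrow> sgrade V = sgrade W \<Longrightarrow> unit_mor V W \<in> ghom V W"
  unfolding ghom_def unit_mor_def sgrade_def by (auto dest: simple_obj_fst)

lemma unit_mor_mcomp:
  "simple_obj V \<Longrightarrow> mcomp V (unit_mor V W) (unit_mor U V) = (unit_mor U W :: 'k::comm_ring_1 mat)"
  unfolding mcomp_def unit_mor_def by (subst simple_obj_fst) (auto intro!: ext)

lemma unit_mor_self: "simple_obj V \<Longrightarrow> unit_mor V V = (mid V :: 'k::comm_ring_1 mat)"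
  unfolding mid_def unit_mor_def by (subst simple_obj_fst) (auto intro!: ext)

lemma iso_mor_unit_mor:
  assumes "simple_obj V" "simple_obj W" "sgrade V = sgrade W"
  shows "iso_mor V W (unit_mor V W :: 'k::comm_ring_1 mat)"
  unfolding iso_mor_def using assms
  by (intro conjI bexI[of _ "unit_mor W V"] unit_mor_ghom) (auto simp: unit_mor_mcomp unit_mor_self)

lemma kron_unit_mor:
  assumes "simple_obj C" "simple_obj M" "simple_obj C'" "simple_obj M'"
  shows "kron (unit_mor C C') (unit_mor M M') = (unit_mor (act p C M) (act q C' M') :: 'k::comm_ring_1 mat)"
  by (intro ext) (auto simp: unit_mor_def kron_def simple_act assms split: bt.splits)

lemma mcon_simple:
  assumes "simple_obj C" "simple_obj D" "simple_obj M"
  shows "mcon G p \<Psi> C D M = mscale (\<Psi> (sgrade C) (sgrade D) (p (sgrade C \<otimes>\<^bsub>G\<^esub> sgrade D) (sgrade M)))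
            (unit_mor (act p (gtens G C D) M) (act p C (act p D M)))"
proof (intro ext)
  fix w v
  have C: "fst C = {the_elem (fst C)}" and D: "fst D = {the_elem (fst D)}"
    and M: "fst M = {the_elem (fst M)}"
    using simple_obj_fst assms by blast+
  show "mcon G p \<Psi> C D M w v = mscale (\<Psi> (sgrade C) (sgrade D) (p (sgrade C \<otimes>\<^bsub>G\<^esub> sgrade D) (sgrade M)))
            (unit_mor (act p (gtens G C D) M) (act p C (act p D M))) w v"
  proof (cases "\<exists>a b m. w = Nd a (Nd b m)")
    case True
    then obtain a b m where w: "w = Nd a (Nd b m)"
      by blast
    show ?thesis
      unfolding w mcon_def mscale_def unit_mor_def
      by (subst C, subst D, subst M) (auto simp: simple_act simple_gtens assms sgrade_def)
  next
    case False
    then show ?thesis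
      by (auto simp: mcon_def mscale_def unit_mor_def simple_act assms split: bt.splits)
  qed
qed

subsection \<open>Module functors and their rescaling\<close>

lemma
  assumes "lin_functor X Y Fo Fm"
  shows lin_functor_gobj: "gobj X V \<Longrightarrow> gobj Y (Fo V)"
    and lin_functor_ghom: "gobj X V \<Longrightarrow> gobj X W \<Longrightarrow> \<phi> \<in> ghom V W \<Longrightarrow> Fm V W \<phi> \<in> ghom (Fo V) (Fo W)"
    and lin_functor_mid: "gobj X V \<Longrightarrow> Fm V V (mid V) = mid (Fo V)"
    and lin_functor_mcomp: "gobj X U \<Longrightarrow> gobj X V \<Longrightarrow> gobj X W \<Longrightarrow> \<phi> \<in> ghom U V \<Longrightarrow> \<psi> \<in> ghom V W \<Longrightarrow>
      Fm U W (mcomp V \<psi> \<phi>) = mcomp (Fo V) (Fm V W \<psi>) (Fm U V \<phi>)"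
    and lin_functor_mscale: "gobj X V \<Longrightarrow> gobj X W \<Longrightarrow> \<phi> \<in> ghom V W \<Longrightarrow>
      Fm V W (mscale c \<phi>) = mscale c (Fm V W \<phi>)"
  using assms unfolding lin_functor_def mscale_def by blast+

lemma lin_functor_iso_mor:
  assumes F: "lin_functor X Y Fo Fm" and "gobj X V" "gobj X W" "iso_mor V W \<phi>"
  shows "iso_mor (Fo V) (Fo W) (Fm V W \<phi>)"
proof -
  obtain \<psi> where \<psi>: "\<phi> \<in> ghom V W" "\<psi> \<in> ghom W V" "mcomp W \<psi> \<phi> = mid V" "mcomp V \<phi> \<psi> = mid W"
    using assms(4) unfolding iso_mor_def by blast
  show ?thesis
    unfolding iso_mor_def using assms(2,3) \<psi>
    by (intro conjI lin_functor_ghom[OF F] bexI[of _ "Fm W V \<psi>"])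
      (simp_all flip: lin_functor_mcomp[OF F] add: lin_functor_mid[OF F])
qed

lemma
  assumes "module_functor G X \<phi>X \<Psi>X Y \<phi>Y \<Psi>Y Fo Fm s"
  shows module_functor_lin: "lin_functor X Y Fo Fm"
    and module_functor_coh_iso: "gobj (carrier G) C \<Longrightarrow> gobj X M \<Longrightarrow>
      iso_mor (Fo (act \<phi>X C M)) (act \<phi>Y C (Fo M)) (s C M)"
    and module_functor_natural: "gobj (carrier G) C \<Longrightarrow> gobj (carrier G) C' \<Longrightarrow> gobj X M \<Longrightarrow> gobj X M'
      \<Longrightarrow> f \<in> ghom C C' \<Longrightarrow> \<phi> \<in> ghom M M' \<Longrightarrow>
      mcomp (Fo (act \<phi>X C' M')) (s C' M') (Fm (act \<phi>X C M) (act \<phi>X C' M') (kron f \<phi>))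
        = mcomp (act \<phi>Y C (Fo M)) (kron f (Fm M M' \<phi>)) (s C M)"
    and module_functor_pentagon: "gobj (carrier G) C \<Longrightarrow> gobj (carrier G) D \<Longrightarrow> gobj X M \<Longrightarrow>
      mcomp (act \<phi>Y C (Fo (act \<phi>X D M))) (kron (mid C) (s D M))
        (mcomp (Fo (act \<phi>X C (act \<phi>X D M))) (s C (act \<phi>X D M))
          (Fm (act \<phi>X (gtens G C D) M) (act \<phi>X C (act \<phi>X D M)) (mcon G \<phi>X \<Psi>X C D M)))
      = mcomp (act \<phi>Y (gtens G C D) (Fo M)) (mcon G \<phi>Y \<Psi>Y C D (Fo M)) (s (gtens G C D) M)"
  using assms unfolding module_functor_def by blast+

definition rescaled_fmap :: "('x gobj \<Rightarrow> 'k::field) \<Rightarrow> ('x gobj \<Rightarrow> 'x gobj \<Rightarrow> 'k mat \<Rightarrow> 'k mat)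
    \<Rightarrow> 'x gobj \<Rightarrow> 'x gobj \<Rightarrow> 'k mat \<Rightarrow> 'k mat" where
  "rescaled_fmap c Fm = (\<lambda>V W \<phi>. mscale (c W / c V) (Fm V W \<phi>))"

definition rescaled_coh :: "('g \<Rightarrow> 'x \<Rightarrow> 'x) \<Rightarrow> ('x gobj \<Rightarrow> 'k::field) \<Rightarrow> ('g gobj \<Rightarrow> 'x gobj \<Rightarrow> 'k mat)
    \<Rightarrow> 'g gobj \<Rightarrow> 'x gobj \<Rightarrow> 'k mat" where
  "rescaled_coh \<phi>X c s = (\<lambda>C M. mscale (c M / c (act \<phi>X C M)) (s C M))"

lemma lin_functor_rescaled:
  assumes F: "lin_functor X Y Fo Fm" and c: "\<And>V. gobj X V \<Longrightarrow> c V \<noteq> 0"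
  shows "lin_functor X Y Fo (rescaled_fmap c Fm)"
proof -
  have "mscale (c W / c U) (Fm U W (mcomp V \<psi> \<phi>))
      = mcomp (Fo V) (mscale (c W / c V) (Fm V W \<psi>)) (mscale (c V / c U) (Fm U V \<phi>))"
    if "gobj X U" "gobj X V" "gobj X W" "\<phi> \<in> ghom U V" "\<psi> \<in> ghom V W" for U V W \<phi> \<psi>
    using that c[of V] by (simp add: lin_functor_mcomp[OF F])
  moreover have "mscale (c V / c V) (Fm V V (mid V)) = mid (Fo V)" if "gobj X V" for V
    using that c[of V] by (simp add: lin_functor_mid[OF F])
  ultimately show ?thesis
    using F unfolding lin_functor_def rescaled_fmap_def
    by (auto simp: mscale_ghom) (auto simp: mscale_def distrib_left mult_ac)
qed

lemma module_functor_rescaled: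
  assumes G: "group G" and A: "group_action G X \<phi>X"
    and F: "module_functor G X \<phi>X \<Psi>X Y \<phi>Y \<Psi>Y Fo Fm s"
    and c: "\<And>V. gobj X V \<Longrightarrow> c V \<noteq> 0"
  shows "module_functor G X \<phi>X \<Psi>X Y \<phi>Y \<Psi>Y Fo (rescaled_fmap c Fm) (rescaled_coh \<phi>X c s)"
proof -
  note act = gobj_act[OF A]
  have "iso_mor (Fo (act \<phi>X C M)) (act \<phi>Y C (Fo M)) (mscale (c M / c (act \<phi>X C M)) (s C M))"
    if "gobj (carrier G) C" "gobj X M" for C M
    using that by (intro iso_mor_mscale module_functor_coh_iso[OF F]) (auto simp: c act)
  moreover have
    "mcomp (Fo (act \<phi>X C' M')) (mscale (c M' / c (act \<phi>X C' M')) (s C' M'))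
        (mscale (c (act \<phi>X C' M') / c (act \<phi>X C M)) (Fm (act \<phi>X C M) (act \<phi>X C' M') (kron f \<phi>)))
      = mcomp (act \<phi>Y C (Fo M)) (kron f (mscale (c M' / c M) (Fm M M' \<phi>)))
          (mscale (c M / c (act \<phi>X C M)) (s C M))"
    if "gobj (carrier G) C" "gobj (carrier G) C'" "gobj X M" "gobj X M'" "f \<in> ghom C C'" "\<phi> \<in> ghom M M'"
    for C C' M M' f \<phi>
    using that c[of M] c[of "act \<phi>X C' M'"] act[of C' M']
    by (simp add: kron_mscale_right module_functor_natural[OF F])
  moreover have
    "mcomp (act \<phi>Y C (Fo (act \<phi>X D M))) (kron (mid C) (mscale (c M / c (act \<phi>X D M)) (s D M)))
        (mcomp (Fo (act \<phi>X C (act \<phi>X D M)))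
          (mscale (c (act \<phi>X D M) / c (act \<phi>X C (act \<phi>X D M))) (s C (act \<phi>X D M)))
          (mscale (c (act \<phi>X C (act \<phi>X D M)) / c (act \<phi>X (gtens G C D) M))
            (Fm (act \<phi>X (gtens G C D) M) (act \<phi>X C (act \<phi>X D M)) (mcon G \<phi>X \<Psi>X C D M))))
      = mcomp (act \<phi>Y (gtens G C D) (Fo M)) (mcon G \<phi>Y \<Psi>Y C D (Fo M))
          (mscale (c M / c (act \<phi>X (gtens G C D) M)) (s (gtens G C D) M))"
    if "gobj (carrier G) C" "gobj (carrier G) D" "gobj X M" for C D M
    using that c[of "act \<phi>X D M"] c[of "act \<phi>X C (act \<phi>X D M)"] act[of D M] act[of C "act \<phi>X D M"]
    by (simp add: kron_mscale_right module_functor_pentagon[OF F])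
  moreover have "lin_functor X Y Fo (rescaled_fmap c Fm)"
    by (rule lin_functor_rescaled[OF module_functor_lin[OF F] c])
  ultimately show ?thesis
    unfolding module_functor_def rescaled_fmap_def rescaled_coh_def by blast
qed

lemma module_functor_iso_rescaled:
  assumes A: "group_action G X \<phi>X"
    and F: "module_functor G X \<phi>X \<Psi>X Y \<phi>Y \<Psi>Y Fo Fm s"
    and c: "\<And>V. gobj X V \<Longrightarrow> c V \<noteq> 0"
  shows "module_functor_iso G X \<phi>X \<phi>Y Fo Fm s Fo (rescaled_fmap c Fm) (rescaled_coh \<phi>X c s)
           (\<lambda>V. mscale (c V) (mid (Fo V)))"
proof -
  note L = module_functor_lin[OF F]
  have fin: "finite (fst (Fo V))" if "gobj X V" for V
    using gobj_finite lin_functor_gobj[OF L that] .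
  have "iso_mor (Fo V) (Fo V) (mscale (c V) (mid (Fo V)))" if "gobj X V" for V
    using that by (intro iso_mor_mscale iso_mor_mid fin c)
  moreover have "mcomp (Fo V) (mscale (c W / c V) (Fm V W \<phi>)) (mscale (c V) (mid (Fo V)))
      = mcomp (Fo W) (mscale (c W) (mid (Fo W))) (Fm V W \<phi>)"
    if "gobj X V" "gobj X W" "\<phi> \<in> ghom V W" for V W \<phi>
    using that c[of V] lin_functor_ghom[OF L that]
    by (simp add: mcomp_mid_left[OF fin] mcomp_mid_right[OF fin])
  moreover have "mcomp (Fo (act \<phi>X C M)) (mscale (c M / c (act \<phi>X C M)) (s C M))
        (mscale (c (act \<phi>X C M)) (mid (Fo (act \<phi>X C M))))
      = mcomp (act \<phi>Y C (Fo M)) (kron (mid C) (mscale (c M) (mid (Fo M)))) (s C M)"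
    if "gobj (carrier G) C" "gobj X M" for C M
    using that c[of "act \<phi>X C M"] gobj_act[OF A that] iso_morD[OF module_functor_coh_iso[OF F that]]
    by (simp add: kron_mscale_right kron_mid[where \<psi>=\<phi>Y] mcomp_mid_right[OF fin]
        mcomp_mid_left[OF finite_act[OF gobj_finite[OF that(1)] fin[OF that(2)]]])
  ultimately show ?thesis
    unfolding module_functor_iso_def rescaled_fmap_def rescaled_coh_def by blast
qed

definition norm_factor :: "('x gobj \<Rightarrow> 'y gobj) \<Rightarrow> ('x gobj \<Rightarrow> 'x gobj \<Rightarrow> 'k mat \<Rightarrow> 'k mat)
    \<Rightarrow> 'x gobj \<Rightarrow> 'k::comm_ring_1" where
  "norm_factor Fo Fm V =
     (if simple_obj V
      then entry (Fo V) (Fo (simple_of (sgrade V))) (Fm V (simple_of (sgrade V)) (unit_mor V (simple_of (sgrade V))))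
      else 1)"

lemma norm_factor_nonzero:
  assumes F: "lin_functor X Y Fo Fm" and simple: "\<And>V. gobj X V \<Longrightarrow> simple_obj V \<Longrightarrow> simple_obj (Fo V)"
    and V: "gobj X V"
  shows "norm_factor Fo Fm V \<noteq> 0"
proof (cases "simple_obj V")
  case True
  let ?R = "simple_of (sgrade V)"
  have R: "gobj X ?R" "simple_obj ?R" "sgrade ?R = sgrade V"
    using gobj_simple_of sgrade_in[OF V True] simple_of_simple by auto
  have "iso_mor (Fo V) (Fo ?R) (Fm V ?R (unit_mor V ?R))"
    using True R by (intro lin_functor_iso_mor[OF F V R(1)] iso_mor_unit_mor) auto
  then have "entry (Fo V) (Fo ?R) (Fm V ?R (unit_mor V ?R)) \<noteq> 0"
    using simple[OF V True] simple[OF R(1,2)] by (rule iso_mor_entry_nonzero)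
  then show ?thesis
    unfolding norm_factor_def using True by simp
qed (simp add: norm_factor_def)

lemma norm_factor_unit_mor:
  assumes F: "lin_functor X Y Fo Fm" and simple: "\<And>V. gobj X V \<Longrightarrow> simple_obj V \<Longrightarrow> simple_obj (Fo V)"
    and VW: "gobj X V" "gobj X W" "simple_obj V" "simple_obj W" "sgrade V = sgrade W"
  shows "norm_factor Fo Fm V = norm_factor Fo Fm W * entry (Fo V) (Fo W) (Fm V W (unit_mor V W))"
proof -
  let ?R = "simple_of (sgrade W)"
  have R: "gobj X ?R" "simple_obj ?R" "sgrade ?R = sgrade W"
    using gobj_simple_of sgrade_in[OF VW(2,4)] simple_of_simple by auto
  have "Fm V ?R (unit_mor V ?R) = Fm V ?R (mcomp W (unit_mor W ?R) (unit_mor V W))"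
    using VW by (simp add: unit_mor_mcomp)
  also have "\<dots> = mcomp (Fo W) (Fm W ?R (unit_mor W ?R)) (Fm V W (unit_mor V W))"
    using VW R by (intro lin_functor_mcomp[OF F] unit_mor_ghom) auto
  finally show ?thesis
    unfolding norm_factor_def using VW simple by (simp add: entry_mcomp)
qed

lemma entry_rescaled_unit_mor:
  assumes F: "lin_functor X Y Fo Fm" and simple: "\<And>V. gobj X V \<Longrightarrow> simple_obj V \<Longrightarrow> simple_obj (Fo V)"
    and VW: "gobj X V" "gobj X W" "simple_obj V" "simple_obj W" "sgrade V = sgrade W"
  shows "entry (Fo V) (Fo W) (rescaled_fmap (norm_factor Fo Fm) Fm V W (unit_mor V W)) = (1::'k::field)"
  using norm_factor_unit_mor[OF F simple VW] norm_factor_nonzero[OF F simple VW(1)]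
    norm_factor_nonzero[OF F simple VW(2)]
  by (simp add: rescaled_fmap_def)

subsection \<open>Reading off \<open>f\<close> and \<open>\<Lambda>\<close>\<close>

lemma (in group_action) act_act_inv:
  assumes "g \<in> carrier G" "x \<in> E"
  shows "\<phi> g (\<phi> (inv g) x) = x"
proof -
  interpret group G
    using group_hom group_hom.axioms(1) by blast
  show ?thesis
    using orbit_sym_aux[of "inv g" x] assms by simp
qed

locale normalized_module_functor =
  fixes G :: "'g monoid" and X :: "'x set" and \<phi>X :: "'g \<Rightarrow> 'x \<Rightarrow> 'x"
    and \<Psi>X :: "'g \<Rightarrow> 'g \<Rightarrow> 'x \<Rightarrow> 'k::field"
    and Y :: "'y set" and \<phi>Y :: "'g \<Rightarrow> 'y \<Rightarrow> 'y" and \<Psi>Y :: "'g \<Rightarrow> 'g \<Rightarrow> 'y \<Rightarrow> 'k"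
    and Fo :: "'x gobj \<Rightarrow> 'y gobj" and Fm :: "'x gobj \<Rightarrow> 'x gobj \<Rightarrow> 'k mat \<Rightarrow> 'k mat"
    and s :: "'g gobj \<Rightarrow> 'x gobj \<Rightarrow> 'k mat"
  assumes is_group: "group G"
    and is_action: "group_action G X \<phi>X"
    and is_module_functor: "module_functor G X \<phi>X \<Psi>X Y \<phi>Y \<Psi>Y Fo Fm s"
    and simple_image: "\<And>V. gobj X V \<Longrightarrow> simple_obj V \<Longrightarrow> simple_obj (Fo V)"
    and entry_image_unit_mor: "\<And>V W. gobj X V \<Longrightarrow> gobj X W \<Longrightarrow> simple_obj V \<Longrightarrow> simple_obj W \<Longrightarrow>
      sgrade V = sgrade W \<Longrightarrow> entry (Fo V) (Fo W) (Fm V W (unit_mor V W)) = 1"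
begin

definition fgrade :: "'x \<Rightarrow> 'y" where
  "fgrade x = sgrade (Fo (simple_of x))"

definition coh_entry :: "'g gobj \<Rightarrow> 'x gobj \<Rightarrow> 'k" where
  "coh_entry C M = entry (Fo (act \<phi>X C M)) (act \<phi>Y C (Fo M)) (s C M)"

text \<open>The coherence datum \<open>s\<^bsub>\<delta>\<^sup>g, y\<^esub>\<close> lives on \<open>F(\<delta>\<^sup>g \<triangleright> y)\<close>; indexing it by \<open>x = g\<cdot>y\<close> as in the
  paper means evaluating it at \<open>y = g\<inverse>\<cdot>x\<close>.\<close>
definition coh_scalar :: "'g \<Rightarrow> 'x \<Rightarrow> 'k" where
  "coh_scalar g x = coh_entry (simple_of g) (simple_of (\<phi>X (inv\<^bsub>G\<^esub> g) x))"

lemma is_lin_functor: "lin_functor X Y Fo Fm"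
  using module_functor_lin[OF is_module_functor] .

lemma simple_act_obj:
  assumes "gobj (carrier G) C" "gobj X M" "simple_obj C" "simple_obj M"
  shows "gobj X (act \<phi>X C M)" "simple_obj (act \<phi>X C M)"
  using gobj_act[OF is_action assms(1,2)] simple_act[OF assms(3,4)] by blast+

lemma sgrade_image: "gobj X V \<Longrightarrow> simple_obj V \<Longrightarrow> sgrade (Fo V) = fgrade (sgrade V)"
proof -
  assume V: "gobj X V" "simple_obj V"
  let ?R = "simple_of (sgrade V)"
  have R: "gobj X ?R" "simple_obj ?R" "sgrade ?R = sgrade V"
    using gobj_simple_of sgrade_in[OF V] simple_of_simple by auto
  have "Fm V ?R (unit_mor V ?R) \<in> ghom (Fo V) (Fo ?R)"
    using V R by (intro lin_functor_ghom[OF is_lin_functor] unit_mor_ghom) auto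
  moreover have "entry (Fo V) (Fo ?R) (Fm V ?R (unit_mor V ?R)) \<noteq> 0"
    using entry_image_unit_mor[OF V(1) R(1) V(2) R(2) R(3)[symmetric]] by simp
  ultimately have "sgrade (Fo ?R) = sgrade (Fo V)"
    by (rule ghom_entry_sgrade)
  then show ?thesis
    unfolding fgrade_def using R by simp
qed

lemma fgrade_in: "x \<in> X \<Longrightarrow> fgrade x \<in> Y"
  unfolding fgrade_def
  by (intro sgrade_in lin_functor_gobj[OF is_lin_functor] simple_image gobj_simple_of simple_of_simple)

lemma coh_entry_nonzero:
  assumes "gobj (carrier G) C" "gobj X M" "simple_obj C" "simple_obj M"
  shows "coh_entry C M \<noteq> 0"
  unfolding coh_entry_def
  using module_functor_coh_iso[OF is_module_functor assms(1,2)]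
  by (rule iso_mor_entry_nonzero)
    (simp_all add: simple_image simple_act_obj simple_act assms)

lemma fgrade_equivariant:
  assumes g: "g \<in> carrier G" and x: "x \<in> X"
  shows "fgrade (\<phi>X g x) = \<phi>Y g (fgrade x)"
proof -
  let ?C = "simple_of g" and ?M = "simple_of x"
  have CM: "gobj (carrier G) ?C" "gobj X ?M" "simple_obj ?C" "simple_obj ?M"
    using g x by (auto intro: gobj_simple_of simple_of_simple)
  have "sgrade (act \<phi>Y ?C (Fo ?M)) = sgrade (Fo (act \<phi>X ?C ?M))"
    using coh_entry_nonzero[OF CM] iso_morD[OF module_functor_coh_iso[OF is_module_functor CM(1,2)]]
    unfolding coh_entry_def by (rule ghom_entry_sgrade[rotated])
  then show ?thesis
    using CM by (simp add: simple_act sgrade_image simple_act_obj simple_image)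
qed

lemma coh_entry_sgrade:
  assumes CM: "gobj (carrier G) C" "gobj X M" "simple_obj C" "simple_obj M"
    and CM': "gobj (carrier G) C'" "gobj X M'" "simple_obj C'" "simple_obj M'"
    and eq: "sgrade C = sgrade C'" "sgrade M = sgrade M'"
  shows "coh_entry C M = coh_entry C' M'"
proof -
  let ?A = "act \<phi>X C M" and ?A' = "act \<phi>X C' M'"
  have "mcomp (Fo ?A') (s C' M') (Fm ?A ?A' (kron (unit_mor C C') (unit_mor M M')))
      = mcomp (act \<phi>Y C (Fo M)) (kron (unit_mor C C') (Fm M M' (unit_mor M M'))) (s C M)"
    using CM CM' eq by (intro module_functor_natural[OF is_module_functor] unit_mor_ghom) auto
  then have "entry (Fo ?A) (act \<phi>Y C' (Fo M')) (mcomp (Fo ?A') (s C' M') (Fm ?A ?A' (unit_mor ?A ?A')))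
      = entry (Fo ?A) (act \<phi>Y C' (Fo M'))
          (mcomp (act \<phi>Y C (Fo M)) (kron (unit_mor C C') (Fm M M' (unit_mor M M'))) (s C M))"
    using CM CM' by (simp add: kron_unit_mor[where p = \<phi>X and q = \<phi>X])
  moreover have "entry (Fo ?A) (Fo ?A') (Fm ?A ?A' (unit_mor ?A ?A')) = 1"
    using CM CM' eq by (intro entry_image_unit_mor) (simp_all add: simple_act_obj simple_act)
  ultimately show ?thesis
    using CM CM' eq
    by (simp add: coh_entry_def entry_mcomp entry_kron simple_act simple_act_obj simple_image
        entry_image_unit_mor)
qed

lemma coh_entry_eq_coh_scalar:
  assumes "gobj (carrier G) C" "gobj X M" "simple_obj C" "simple_obj M"
  shows "coh_entry C M = coh_scalar (sgrade C) (\<phi>X (sgrade C) (sgrade M))"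
  unfolding coh_scalar_def
  using assms sgrade_in[OF assms(1,3)] sgrade_in[OF assms(2,4)]
  by (intro coh_entry_sgrade)
    (simp_all add: gobj_simple_of simple_of_simple group_action.orbit_sym_aux[OF is_action])

lemma coh_scalar_nonzero:
  assumes "g \<in> carrier G" "x \<in> X"
  shows "coh_scalar g x \<noteq> 0"
proof -
  have "\<phi>X (inv\<^bsub>G\<^esub> g) x \<in> X"
    using group_action.element_image[OF is_action group.inv_closed[OF is_group assms(1)] assms(2) refl] .
  then show ?thesis
    unfolding coh_scalar_def using assms
    by (intro coh_entry_nonzero gobj_simple_of simple_of_simple)
qed

lemma entry_image_mcon:
  assumes "gobj (carrier G) C" "gobj (carrier G) D" "gobj X M"
    and "simple_obj C" "simple_obj D" "simple_obj M"
  shows "entry (Fo (act \<phi>X (gtens G C D) M)) (Fo (act \<phi>X C (act \<phi>X D M)))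
      (Fm (act \<phi>X (gtens G C D) M) (act \<phi>X C (act \<phi>X D M)) (mcon G \<phi>X \<Psi>X C D M))
    = \<Psi>X (sgrade C) (sgrade D) (\<phi>X (sgrade C \<otimes>\<^bsub>G\<^esub> sgrade D) (sgrade M))"
proof -
  let ?P = "act \<phi>X (gtens G C D) M" and ?Q = "act \<phi>X C (act \<phi>X D M)"
  have P: "gobj X ?P" "simple_obj ?P"
    using simple_act_obj[OF gobj_gtens[OF is_group assms(1,2)] assms(3) simple_gtens(1)[OF assms(4,5)] assms(6)] .
  have Q: "gobj X ?Q" "simple_obj ?Q"
    using assms by (simp_all add: simple_act_obj simple_act)
  have PQ: "sgrade ?P = sgrade ?Q"
    using assms sgrade_in[OF assms(1,4)] sgrade_in[OF assms(2,5)] sgrade_in[OF assms(3,6)]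
    by (simp add: simple_act simple_gtens group_action.composition_rule[OF is_action])
  then have "unit_mor ?P ?Q \<in> (ghom ?P ?Q :: 'k mat set)"
    using P Q by (intro unit_mor_ghom)
  then show ?thesis
    using entry_image_unit_mor[OF P(1) Q(1) P(2) Q(2) PQ]
    by (simp add: mcon_simple assms lin_functor_mscale[OF is_lin_functor P(1) Q(1)])
qed

lemma coh_entry_pentagon:
  assumes CDM: "gobj (carrier G) C" "gobj (carrier G) D" "gobj X M"
    and simple: "simple_obj C" "simple_obj D" "simple_obj M"
  shows "coh_entry D M * coh_entry C (act \<phi>X D M)
      * \<Psi>X (sgrade C) (sgrade D) (\<phi>X (sgrade C \<otimes>\<^bsub>G\<^esub> sgrade D) (sgrade M))
    = \<Psi>Y (sgrade C) (sgrade D) (\<phi>Y (sgrade C \<otimes>\<^bsub>G\<^esub> sgrade D) (sgrade (Fo M)))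
      * coh_entry (gtens G C D) M"
proof -
  let ?N = "act \<phi>X D M" and ?P = "act \<phi>X (gtens G C D) M" and ?Q = "act \<phi>X C (act \<phi>X D M)"
  let ?T = "act \<phi>Y C (act \<phi>Y D (Fo M))"
  have N: "gobj X ?N" "simple_obj ?N"
    using CDM simple by (simp_all add: simple_act_obj)
  have FM: "simple_obj (Fo M)" "simple_obj (Fo ?N)" "simple_obj (Fo ?Q)"
    using CDM simple N by (simp_all add: simple_image simple_act_obj)
  have "entry (Fo ?P) ?T (mcomp (act \<phi>Y C (Fo ?N)) (kron (mid C) (s D M))
          (mcomp (Fo ?Q) (s C ?N) (Fm ?P ?Q (mcon G \<phi>X \<Psi>X C D M))))
      = entry (Fo ?P) ?T (mcomp (act \<phi>Y (gtens G C D) (Fo M)) (mcon G \<phi>Y \<Psi>Y C D (Fo M)) (s (gtens G C D) M))"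
    using module_functor_pentagon[OF is_module_functor CDM] by simp
  then show ?thesis
    using CDM simple FM
    by (simp add: entry_mcomp simple_act simple_gtens entry_kron entry_mid entry_image_mcon
        mcon_simple[OF simple(1,2) FM(1)] coh_entry_def mult_ac)
qed

lemma coh_scalar_cocycle:
  assumes g: "g \<in> carrier G" and h: "h \<in> carrier G" and x: "x \<in> X"
  shows "coh_scalar h (\<phi>X (inv\<^bsub>G\<^esub> g) x) * coh_scalar g x * \<Psi>X g h x
    = \<Psi>Y g h (fgrade x) * coh_scalar (g \<otimes>\<^bsub>G\<^esub> h) x"
proof -
  have gh: "g \<otimes>\<^bsub>G\<^esub> h \<in> carrier G"
    using monoid.m_closed[OF group.is_monoid[OF is_group] g h] .
  define y where "y = \<phi>X (inv\<^bsub>G\<^esub> (g \<otimes>\<^bsub>G\<^esub> h)) x"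
  have y: "y \<in> X"
    unfolding y_def
    using group_action.element_image[OF is_action group.inv_closed[OF is_group gh] x refl] .
  have hy: "\<phi>X h y \<in> X"
    using group_action.element_image[OF is_action h y refl] .
  have ghy: "\<phi>X (g \<otimes>\<^bsub>G\<^esub> h) y = x"
    unfolding y_def using group_action.act_act_inv[OF is_action gh x] .
  then have g_hy: "\<phi>X g (\<phi>X h y) = x"
    using group_action.composition_rule[OF is_action y g h] by simp
  then have inv_g_x: "\<phi>X (inv\<^bsub>G\<^esub> g) x = \<phi>X h y"
    using group_action.orbit_sym_aux[OF is_action g hy] by simp
  let ?C = "simple_of g" and ?D = "simple_of h" and ?M = "simple_of y"
  have CDM: "gobj (carrier G) ?C" "gobj (carrier G) ?D" "gobj X ?M"
    and simple: "simple_obj ?C" "simple_obj ?D" "simple_obj ?M"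
    using g h y by (simp_all add: gobj_simple_of simple_of_simple)
  have "coh_entry ?D ?M = coh_scalar h (\<phi>X (inv\<^bsub>G\<^esub> g) x)"
    using CDM simple by (simp add: coh_entry_eq_coh_scalar inv_g_x)
  moreover have "coh_entry ?C (act \<phi>X ?D ?M) = coh_scalar g x"
    using CDM simple
    by (simp add: coh_entry_eq_coh_scalar simple_act_obj simple_act g_hy)
  moreover have "coh_entry (gtens G ?C ?D) ?M = coh_scalar (g \<otimes>\<^bsub>G\<^esub> h) x"
    using CDM simple gobj_gtens[OF is_group CDM(1,2)]
    by (simp add: coh_entry_eq_coh_scalar simple_gtens ghy)
  moreover have "\<phi>Y (g \<otimes>\<^bsub>G\<^esub> h) (sgrade (Fo ?M)) = fgrade x"
    using CDM simple by (simp add: sgrade_image fgrade_equivariant[OF gh y, symmetric] ghy)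
  ultimately show ?thesis
    using coh_entry_pentagon[OF CDM simple] by (simp add: ghy)
qed

lemma is_F_f_Lambda: "is_F_f_Lambda G X \<phi>X \<phi>Y fgrade coh_scalar Fo s"
  unfolding is_F_f_Lambda_def
  using coh_entry_eq_coh_scalar[unfolded coh_entry_def entry_def]
  by (simp add: simple_image sgrade_image)

end

theorem lemma4p20:
  fixes G :: "'g monoid"
    and X :: "'x set" and Y :: "'y set"
    and \<phi>X :: "'g \<Rightarrow> 'x \<Rightarrow> 'x" and \<phi>Y :: "'g \<Rightarrow> 'y \<Rightarrow> 'y"
    and \<omega> :: "'g \<Rightarrow> 'g \<Rightarrow> 'g \<Rightarrow> 'k::field"
    and \<Psi>X :: "'g \<Rightarrow> 'g \<Rightarrow> 'x \<Rightarrow> 'k" and \<Psi>Y :: "'g \<Rightarrow> 'g \<Rightarrow> 'y \<Rightarrow> 'k"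
    and Fo :: "'x gobj \<Rightarrow> 'y gobj" and Fm :: "'x gobj \<Rightarrow> 'x gobj \<Rightarrow> 'k mat \<Rightarrow> 'k mat"
    and s :: "'g gobj \<Rightarrow> 'x gobj \<Rightarrow> 'k mat"
  assumes "alg_closed TYPE('k)"
    and "group G"
    and "normalized_3cocycle G \<omega>"
    and "group_action G X \<phi>X" and "group_action G Y \<phi>Y"
    and "module_cochain G X \<phi>X \<omega> \<Psi>X" and "module_cochain G Y \<phi>Y \<omega> \<Psi>Y"
    and "module_functor G X \<phi>X \<Psi>X Y \<phi>Y \<Psi>Y Fo Fm s"
    and "\<forall>V. gobj X V \<and> simple_obj V \<longrightarrow> simple_obj (Fo V)"
  shows "\<exists>f \<Lambda> Ho Hm sH \<eta>.
           f \<in> X \<rightarrow> Y \<and>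
           (\<forall>g\<in>carrier G. \<forall>x\<in>X. f (\<phi>X g x) = \<phi>Y g (f x)) \<and>
           (\<forall>g\<in>carrier G. \<forall>x\<in>X. \<Lambda> g x \<noteq> 0) \<and>
           (\<forall>g\<in>carrier G. \<forall>h\<in>carrier G. \<forall>x\<in>X.
              \<Lambda> h (\<phi>X (inv\<^bsub>G\<^esub> g) x) * inverse (\<Lambda> (g \<otimes>\<^bsub>G\<^esub> h) x) * \<Lambda> g x
              = inverse (\<Psi>X g h x) * \<Psi>Y g h (f x)) \<and>
           module_functor G X \<phi>X \<Psi>X Y \<phi>Y \<Psi>Y Ho Hm sH \<and>
           is_F_f_Lambda G X \<phi>X \<phi>Y f \<Lambda> Ho sH \<and>
           module_functor_iso G X \<phi>X \<phi>Y Fo Fm s Ho Hm sH \<eta>"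
proof -
  note F = assms(8)
  have simple: "\<And>V. gobj X V \<Longrightarrow> simple_obj V \<Longrightarrow> simple_obj (Fo V)"
    using assms(9) by blast
  let ?c = "norm_factor Fo Fm"
  let ?Hm = "rescaled_fmap ?c Fm" and ?sH = "rescaled_coh \<phi>X ?c s"
  have c: "\<And>V. gobj X V \<Longrightarrow> ?c V \<noteq> 0"
    using norm_factor_nonzero[OF module_functor_lin[OF F] simple] .
  have H: "module_functor G X \<phi>X \<Psi>X Y \<phi>Y \<Psi>Y Fo ?Hm ?sH"
    using module_functor_rescaled[OF assms(2,4) F c] .
  interpret H: normalized_module_functor G X \<phi>X \<Psi>X Y \<phi>Y \<Psi>Y Fo ?Hm ?sH
    by (rule normalized_module_functor.intro[OF assms(2,4) H simple
          entry_rescaled_unit_mor[OF module_functor_lin[OF F] simple]])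
  have "H.coh_scalar h (\<phi>X (inv\<^bsub>G\<^esub> g) x) * inverse (H.coh_scalar (g \<otimes>\<^bsub>G\<^esub> h) x) * H.coh_scalar g x
      = inverse (\<Psi>X g h x) * \<Psi>Y g h (H.fgrade x)"
    if "g \<in> carrier G" "h \<in> carrier G" "x \<in> X" for g h x
  proof -
    have "\<Psi>X g h x \<noteq> 0"
      using assms(6) that unfolding module_cochain_def by blast
    moreover have "H.coh_scalar (g \<otimes>\<^bsub>G\<^esub> h) x \<noteq> 0"
      using H.coh_scalar_nonzero monoid.m_closed[OF group.is_monoid[OF assms(2)]] that by blast
    ultimately show ?thesis
      using H.coh_scalar_cocycle[OF that] by (simp add: field_simps)
  qed
  then show ?thesis
    using H.fgrade_in H.fgrade_equivariant H.coh_scalar_nonzero H H.is_F_f_Lambda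
      module_functor_iso_rescaled[OF assms(4) F c]
    by (intro exI[of _ H.fgrade] exI[of _ H.coh_scalar] exI[of _ Fo] exI[of _ ?Hm] exI[of _ ?sH]
        exI[of _ "\<lambda>V. mscale (?c V) (mid (Fo V))"]) auto
qed

end
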